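(* Let $S$ be an oriented 2-manifold diffeomorphic to the 2-torus, let $g$ and $\tilde g$ be Riemannian metrics on $S$ with codifferentials $\delta$ and $\tilde\delta$ respectively, and let $P,Q\in C^\infty(S)$ with $P,Q>0$. Define on $\Omega^1(S)$ the operators $\delta_p = P^{-1}\delta P$ and $\tilde\delta_q = Q^{-1}\tilde\delta Q$ (i.e. $\delta_p\omega = P^{-1}\delta(P\omega)$, $\tilde\delta_q\omega = Q^{-1}\tilde\delta(Q\omega)$). If $\ker\delta_p\subset\ker\tilde\delta_q$ (as subsets of $\Omega^1(S)$), then $g$ and $\tilde g$ are conformally equivalent and $P = cQ$ for some constant $c>0$. *)

theory Defs
  imports "HOL-Analysis.Analysis"
begin

text \<open>The surface S (diffeomorphic to the 2-torus) is modelled, after pulling back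
along a diffeomorphism, by the standard torus R^2/Z^2: functions on S are
Z^2-periodic functions on R^2 (coordinates (x,y)).\<close>

definition periodic2 :: "(real \<times> real \<Rightarrow> 'b) \<Rightarrow> bool" where
  "periodic2 f \<longleftrightarrow> (\<forall>x y. f (x + 1, y) = f (x, y) \<and> f (x, y + 1) = f (x, y))"

definition pdx :: "(real \<times> real \<Rightarrow> real) \<Rightarrow> real \<times> real \<Rightarrow> real" where
  "pdx f = (\<lambda>(x, y). deriv (\<lambda>t. f (t, y)) x)"

definition pdy :: "(real \<times> real \<Rightarrow> real) \<Rightarrow> real \<times> real \<Rightarrow> real" where
  "pdy f = (\<lambda>(x, y). deriv (\<lambda>t. f (x, t)) y)"

inductive_set partials :: "(real \<times> real \<Rightarrow> real) \<Rightarrow> (real \<times> real \<Rightarrow> real) set"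
  for f where
  base: "f \<in> partials f"
| dx: "h \<in> partials f \<Longrightarrow> pdx h \<in> partials f"
| dy: "h \<in> partials f \<Longrightarrow> pdy h \<in> partials f"

definition smooth2 :: "(real \<times> real \<Rightarrow> real) \<Rightarrow> bool" where
  "smooth2 f \<longleftrightarrow> (\<forall>h \<in> partials f. \<forall>p. h differentiable (at p))"

definition torus_fun :: "(real \<times> real \<Rightarrow> real) \<Rightarrow> bool" where
  "torus_fun f \<longleftrightarrow> smooth2 f \<and> periodic2 f"

text \<open>A Riemannian metric g = E dx^2 + 2F dx dy + G dy^2 on the torus.\<close>
definition riem_metric ::
  "(real \<times> real \<Rightarrow> real) \<Rightarrow> (real \<times> real \<Rightarrow> real) \<Rightarrow> (real \<times> real \<Rightarrow> real) \<Rightarrow> bool" where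
  "riem_metric E F G \<longleftrightarrow> torus_fun E \<and> torus_fun F \<and> torus_fun G \<and>
     (\<forall>p. E p > 0 \<and> E p * G p - (F p)^2 > 0)"

text \<open>Codifferential of the 1-form a dx + b dy w.r.t. g = (E,F,G):
  delta w = - (1/sqrt D) (d_x(sqrt D (g^11 a + g^12 b)) + d_y(sqrt D (g^21 a + g^22 b))),
  D = EG - F^2, (g^ij) = (1/D) [[G,-F],[-F,E]].\<close>
definition codiff ::
  "(real \<times> real \<Rightarrow> real) \<Rightarrow> (real \<times> real \<Rightarrow> real) \<Rightarrow> (real \<times> real \<Rightarrow> real) \<Rightarrow>
   (real \<times> real \<Rightarrow> real) \<Rightarrow> (real \<times> real \<Rightarrow> real) \<Rightarrow> real \<times> real \<Rightarrow> real" where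
  "codiff E F G a b = (\<lambda>p.
     let D = (\<lambda>q. E q * G q - (F q)^2) in
     - (1 / sqrt (D p)) *
       (pdx (\<lambda>q. sqrt (D q) * ((G q * a q - F q * b q) / D q)) p
      + pdy (\<lambda>q. sqrt (D q) * ((- F q * a q + E q * b q) / D q)) p))"

definition twisted_codiff ::
  "(real \<times> real \<Rightarrow> real) \<Rightarrow> (real \<times> real \<Rightarrow> real) \<Rightarrow> (real \<times> real \<Rightarrow> real) \<Rightarrow>
   (real \<times> real \<Rightarrow> real) \<Rightarrow> (real \<times> real \<Rightarrow> real) \<Rightarrow> (real \<times> real \<Rightarrow> real) \<Rightarrow> real \<times> real \<Rightarrow> real" where
  "twisted_codiff E F G P a b = (\<lambda>p. (1 / P p) * codiff E F G (\<lambda>q. P q * a q) (\<lambda>q. P q * b q) p)"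

definition ker_twisted ::
  "(real \<times> real \<Rightarrow> real) \<Rightarrow> (real \<times> real \<Rightarrow> real) \<Rightarrow> (real \<times> real \<Rightarrow> real) \<Rightarrow>
   (real \<times> real \<Rightarrow> real) \<Rightarrow> ((real \<times> real \<Rightarrow> real) \<times> (real \<times> real \<Rightarrow> real)) set" where
  "ker_twisted E F G P = {(a, b). torus_fun a \<and> torus_fun b \<and>
      (\<forall>p. twisted_codiff E F G P a b p = 0)}"

definition conformally_equivalent ::
  "(real \<times> real \<Rightarrow> real) \<Rightarrow> (real \<times> real \<Rightarrow> real) \<Rightarrow> (real \<times> real \<Rightarrow> real) \<Rightarrow>
   (real \<times> real \<Rightarrow> real) \<Rightarrow> (real \<times> real \<Rightarrow> real) \<Rightarrow> (real \<times> real \<Rightarrow> real) \<Rightarrow> bool" where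
  "conformally_equivalent E F G E' F' G' \<longleftrightarrow>
     (\<exists>lam. torus_fun lam \<and> (\<forall>p. lam p > 0 \<and> E' p = lam p * E p \<and> F' p = lam p * F p \<and> G' p = lam p * G p))"

end

theory Submission
  imports Defs
begin

text \<open>Write a 1-form \<omega> through its flux X = P \<surd>(det g) g\<inverse> \<omega>, a vector field; then
  \<delta>_P \<omega> = - div X / (P \<surd>(det g)), so ker \<delta>_P corresponds to the divergence-free periodic
  fields. The same form has flux M X with respect to the metric g' and the weight Q, where
  M = (Q \<surd>(det g')) / (P \<surd>(det g)) g'\<inverse> g. The hypothesis therefore says that M maps
  divergence-free periodic fields to divergence-free fields. Testing this with constant fields
  and with the plane waves (\<alpha>, \<beta>) sin (2\<pi>(m x + n y)) and (\<alpha>, \<beta>) cos (2\<pi>(m x + n y)),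
  \<alpha> m + \<beta> n = 0, forces M to be a constant multiple of the identity: g' is pointwise
  proportional to g, and then M = Q / P is constant.\<close>

type_synonym rfun2 = "real \<times> real \<Rightarrow> real"

lemma pdx_has_real_derivative:
  assumes "f differentiable (at (x, y))"
  shows "((\<lambda>t. f (t, y)) has_real_derivative pdx f (x, y)) (at x)"
proof -
  have "(\<lambda>t::real. (t, y)) differentiable (at x)"
    by (rule differentiableI) (auto intro!: derivative_eq_intros)
  with assms have "(\<lambda>t. f (t, y)) differentiable (at x)"
    using differentiable_chain_at by (fastforce simp: o_def)
  then show ?thesis
    unfolding pdx_def using DERIV_deriv_iff_real_differentiable by auto
qed

lemma pdy_has_real_derivative:
  assumes "f differentiable (at (x, y))"
  shows "((\<lambda>t. f (x, t)) has_real_derivative pdy f (x, y)) (at y)"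
proof -
  have "(\<lambda>t::real. (x, t)) differentiable (at y)"
    by (rule differentiableI) (auto intro!: derivative_eq_intros)
  with assms have "(\<lambda>t. f (x, t)) differentiable (at y)"
    using differentiable_chain_at by (fastforce simp: o_def)
  then show ?thesis
    unfolding pdy_def using DERIV_deriv_iff_real_differentiable by auto
qed

lemma pdx_eqI:
  assumes "\<And>x y. ((\<lambda>t. f (t, y)) has_real_derivative d (x, y)) (at x)"
  shows "pdx f = d"
  by (rule ext) (auto simp: pdx_def intro!: DERIV_imp_deriv assms)

lemma pdy_eqI:
  assumes "\<And>x y. ((\<lambda>t. f (x, t)) has_real_derivative d (x, y)) (at y)"
  shows "pdy f = d"
  by (rule ext) (auto simp: pdy_def intro!: DERIV_imp_deriv assms)

lemma
  shows pdx_const: "pdx (\<lambda>q. c) = (\<lambda>q. 0)"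
    and pdy_const: "pdy (\<lambda>q. c) = (\<lambda>q. 0)"
  by (rule pdx_eqI pdy_eqI; auto intro!: derivative_eq_intros)+

lemma
  assumes "\<forall>p. f differentiable (at p)" "\<forall>p. g differentiable (at p)"
  shows pdx_add: "pdx (\<lambda>q. f q + g q) = (\<lambda>q. pdx f q + pdx g q)"
    and pdy_add: "pdy (\<lambda>q. f q + g q) = (\<lambda>q. pdy f q + pdy g q)"
    and pdx_mult: "pdx (\<lambda>q. f q * g q) = (\<lambda>q. pdx f q * g q + f q * pdx g q)"
    and pdy_mult: "pdy (\<lambda>q. f q * g q) = (\<lambda>q. pdy f q * g q + f q * pdy g q)"
  by (rule pdx_eqI pdy_eqI; use assms in
      \<open>auto intro!: derivative_eq_intros pdx_has_real_derivative pdy_has_real_derivative\<close>)+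

lemma
  assumes "\<forall>p. f differentiable (at p)" "\<forall>q. (\<phi> has_real_derivative \<phi>' (f q)) (at (f q))"
  shows pdx_compose: "pdx (\<lambda>q. \<phi> (f q)) = (\<lambda>q. \<phi>' (f q) * pdx f q)"
    and pdy_compose: "pdy (\<lambda>q. \<phi> (f q)) = (\<lambda>q. \<phi>' (f q) * pdy f q)"
proof -
  have chain: "((\<lambda>t. \<phi> (f (g t))) has_real_derivative \<phi>' (f (g t)) * d) (at t)"
    if "((\<lambda>t. f (g t)) has_real_derivative d) (at t)" for g d t
    using DERIV_chain2[OF assms(2)[rule_format] that] .
  show "pdx (\<lambda>q. \<phi> (f q)) = (\<lambda>q. \<phi>' (f q) * pdx f q)"
    by (rule pdx_eqI) (use assms(1) in \<open>auto intro!: chain pdx_has_real_derivative\<close>)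
  show "pdy (\<lambda>q. \<phi> (f q)) = (\<lambda>q. \<phi>' (f q) * pdy f q)"
    by (rule pdy_eqI) (use assms(1) in \<open>auto intro!: chain pdy_has_real_derivative\<close>)
qed

lemma smooth2_differentiable: "smooth2 f \<Longrightarrow> f differentiable (at p)"
  unfolding smooth2_def using partials.base by blast

lemma partials_trans: "h \<in> partials g \<Longrightarrow> g \<in> partials f \<Longrightarrow> h \<in> partials f"
  by (induction h rule: partials.induct) (auto intro: partials.intros)

lemma
  assumes "smooth2 f"
  shows smooth2_pdx: "smooth2 (pdx f)" and smooth2_pdy: "smooth2 (pdy f)"
  using assms unfolding smooth2_def by (metis partials_trans partials.intros)+

lemma differentiable_compose_real:
  fixes f :: "real \<times> real \<Rightarrow> real"
  assumes "(\<phi> has_real_derivative d) (at (f p))" "f differentiable (at p)"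
  shows "(\<lambda>q. \<phi> (f q)) differentiable (at p)"
proof -
  have "\<phi> differentiable (at (f p))"
    using assms(1) real_differentiable_def by blast
  from differentiable_chain_at[OF assms(2) this] show ?thesis
    by (simp add: o_def)
qed

text \<open>This set coincides with the smooth2 functions (smooth_terms_iff_smooth2); defining it
  inductively proves closure of smooth2 under all these operations by a single induction,
  once the set is shown to be closed under pdx and pdy.\<close>
inductive_set smooth_terms :: "rfun2 set" where
  smooth: "smooth2 f \<Longrightarrow> f \<in> smooth_terms"
| const: "(\<lambda>q. c) \<in> smooth_terms"
| fst: "fst \<in> smooth_terms"
| snd: "snd \<in> smooth_terms"
| add: "f \<in> smooth_terms \<Longrightarrow> g \<in> smooth_terms \<Longrightarrow> (\<lambda>q. f q + g q) \<in> smooth_terms"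
| mult: "f \<in> smooth_terms \<Longrightarrow> g \<in> smooth_terms \<Longrightarrow> (\<lambda>q. f q * g q) \<in> smooth_terms"
| inverse: "f \<in> smooth_terms \<Longrightarrow> \<forall>q. f q \<noteq> 0 \<Longrightarrow> (\<lambda>q. inverse (f q)) \<in> smooth_terms"
| sqrt: "f \<in> smooth_terms \<Longrightarrow> \<forall>q. f q > 0 \<Longrightarrow> (\<lambda>q. sqrt (f q)) \<in> smooth_terms"
| sin: "f \<in> smooth_terms \<Longrightarrow> (\<lambda>q. sin (f q)) \<in> smooth_terms"
| cos: "f \<in> smooth_terms \<Longrightarrow> (\<lambda>q. cos (f q)) \<in> smooth_terms"

lemma smooth_terms_differentiable: "f \<in> smooth_terms \<Longrightarrow> f differentiable (at p)"
proof (induction f arbitrary: p rule: smooth_terms.induct)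
  case (inverse f)
  have "f p \<noteq> 0" using inverse.hyps(2) by blast
  with inverse show ?case
    by (intro differentiable_compose_real[where \<phi> = inverse]) (auto intro!: derivative_eq_intros)
next
  case (sqrt f)
  have "f p > 0" using sqrt.hyps(2) by blast
  with sqrt show ?case
    by (intro differentiable_compose_real[where \<phi> = sqrt]) (auto intro!: derivative_eq_intros)
next
  case (sin f)
  then show ?case
    by (intro differentiable_compose_real[where \<phi> = sin]) (auto intro!: derivative_eq_intros)
next
  case (cos f)
  then show ?case
    by (intro differentiable_compose_real[where \<phi> = cos]) (auto intro!: derivative_eq_intros)
qed (auto intro: smooth2_differentiable bounded_linear_imp_differentiable
    bounded_linear_fst bounded_linear_snd)

lemma smooth_terms_neg: "f \<in> smooth_terms \<Longrightarrow> (\<lambda>q. - f q) \<in> smooth_terms"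
  using smooth_terms.mult[OF smooth_terms.const[of "-1"], of f] by simp

lemma smooth_terms_diff:
  "f \<in> smooth_terms \<Longrightarrow> g \<in> smooth_terms \<Longrightarrow> (\<lambda>q. f q - g q) \<in> smooth_terms"
  using smooth_terms.add[OF _ smooth_terms_neg, of f g] by simp

lemma smooth_terms_divide:
  "f \<in> smooth_terms \<Longrightarrow> g \<in> smooth_terms \<Longrightarrow> \<forall>q. g q \<noteq> 0 \<Longrightarrow> (\<lambda>q. f q / g q) \<in> smooth_terms"
  using smooth_terms.mult[OF _ smooth_terms.inverse, of f g] by (simp add: divide_inverse)

lemmas smooth_terms_intros =
  smooth_terms.const smooth_terms.fst smooth_terms.snd smooth_terms.add smooth_terms.mult
  smooth_terms.inverse smooth_terms.sqrt smooth_terms.sin smooth_terms.cos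
  smooth_terms_neg smooth_terms_diff smooth_terms_divide

lemma smooth_terms_pd_compose:
  assumes "f \<in> smooth_terms" "pdx f \<in> smooth_terms" "pdy f \<in> smooth_terms"
    and "\<forall>q. (\<phi> has_real_derivative \<phi>' (f q)) (at (f q))" "(\<lambda>q. \<phi>' (f q)) \<in> smooth_terms"
  shows "pdx (\<lambda>q. \<phi> (f q)) \<in> smooth_terms \<and> pdy (\<lambda>q. \<phi> (f q)) \<in> smooth_terms"
proof -
  have f: "\<forall>p. f differentiable (at p)"
    using assms(1) smooth_terms_differentiable by blast
  show ?thesis
    unfolding pdx_compose[OF f assms(4)] pdy_compose[OF f assms(4)]
    using assms(2,3,5) by (intro conjI smooth_terms.mult)
qed

lemma smooth_terms_pd: "f \<in> smooth_terms \<Longrightarrow> pdx f \<in> smooth_terms \<and> pdy f \<in> smooth_terms"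
proof (induction f rule: smooth_terms.induct)
  case (smooth f)
  then show ?case by (simp add: smooth2_pdx smooth2_pdy smooth_terms.smooth)
next
  case fst
  have "pdx fst = (\<lambda>q. 1)" "pdy fst = (\<lambda>q. 0)"
    by (rule pdx_eqI pdy_eqI; auto intro!: derivative_eq_intros)+
  then show ?case by (simp add: smooth_terms.const)
next
  case snd
  have "pdx snd = (\<lambda>q. 0)" "pdy snd = (\<lambda>q. 1)"
    by (rule pdx_eqI pdy_eqI; auto intro!: derivative_eq_intros)+
  then show ?case by (simp add: smooth_terms.const)
next
  case (add f g)
  then show ?case
    by (simp add: pdx_add pdy_add smooth_terms_differentiable smooth_terms.add)
next
  case (mult f g)
  then show ?case
    by (simp add: pdx_mult pdy_mult smooth_terms_differentiable smooth_terms.add smooth_terms.mult)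
next
  case (inverse f)
  then show ?case
    by (intro smooth_terms_pd_compose[where \<phi>' = "\<lambda>t. - (inverse t * inverse t)"])
      (auto intro!: derivative_eq_intros smooth_terms_intros)
next
  case (sqrt f)
  have "f q > 0" "sqrt (f q) \<noteq> 0" for q
    using sqrt.hyps(2)[rule_format, of q] by simp_all
  with sqrt show ?case
    by (intro smooth_terms_pd_compose[where \<phi>' = "\<lambda>t. inverse (sqrt t) / 2"])
      (simp_all add: DERIV_real_sqrt smooth_terms_intros)
next
  case (sin f)
  then show ?case
    by (intro smooth_terms_pd_compose[where \<phi>' = cos])
      (auto intro!: derivative_eq_intros smooth_terms_intros)
next
  case (cos f)
  then show ?case
    by (intro smooth_terms_pd_compose[where \<phi>' = "\<lambda>t. - sin t"])
      (auto intro!: derivative_eq_intros smooth_terms_intros)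
qed (simp add: pdx_const pdy_const smooth_terms.const)

lemma smooth_terms_iff_smooth2: "f \<in> smooth_terms \<longleftrightarrow> smooth2 f"
proof
  assume f: "f \<in> smooth_terms"
  have "h \<in> smooth_terms" if "h \<in> partials f" for h
    using that by (induction h rule: partials.induct) (use f smooth_terms_pd in auto)
  then show "smooth2 f"
    unfolding smooth2_def using smooth_terms_differentiable by blast
qed (rule smooth_terms.smooth)

lemma torus_fun_iff: "torus_fun f \<longleftrightarrow> f \<in> smooth_terms \<and> periodic2 f"
  by (simp add: torus_fun_def smooth_terms_iff_smooth2)

definition divergence :: "rfun2 \<times> rfun2 \<Rightarrow> real \<times> real \<Rightarrow> real" where
  "divergence X p = pdx (fst X) p + pdy (snd X) p"

definition field_transform ::
  "rfun2 \<Rightarrow> rfun2 \<Rightarrow> rfun2 \<Rightarrow> rfun2 \<Rightarrow> rfun2 \<times> rfun2 \<Rightarrow> rfun2 \<times> rfun2" where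
  "field_transform A B C D X =
     (\<lambda>q. A q * fst X q + B q * snd X q, \<lambda>q. C q * fst X q + D q * snd X q)"

lemma divergence_field_transform:
  assumes "\<forall>p. A differentiable (at p)" "\<forall>p. B differentiable (at p)"
    "\<forall>p. C differentiable (at p)" "\<forall>p. D differentiable (at p)"
    "\<forall>p. u differentiable (at p)" "\<forall>p. v differentiable (at p)"
  shows "divergence (field_transform A B C D (u, v)) p =
    (pdx A p + pdy C p) * u p + (pdx B p + pdy D p) * v p
    + A p * pdx u p + B p * pdx v p + C p * pdy u p + D p * pdy v p"
  using assms
  by (simp add: divergence_def field_transform_def pdx_add pdy_add pdx_mult pdy_mult
      differentiable_add differentiable_mult algebra_simps)

definition plane_wave :: "(real \<Rightarrow> real) \<Rightarrow> int \<Rightarrow> int \<Rightarrow> rfun2" where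
  "plane_wave f m n = (\<lambda>q. f (2 * pi * (of_int m * fst q + of_int n * snd q)))"

lemma
  shows plane_wave_sin_smooth: "plane_wave sin m n \<in> smooth_terms"
    and plane_wave_cos_smooth: "plane_wave cos m n \<in> smooth_terms"
  unfolding plane_wave_def by (intro smooth_terms_intros)+

lemma
  shows periodic2_plane_wave_sin: "periodic2 (plane_wave sin m n)"
    and periodic2_plane_wave_cos: "periodic2 (plane_wave cos m n)"
proof -
  have shift: "2 * pi * (of_int m * (x + 1) + of_int n * y) =
      2 * pi * (of_int m * x + of_int n * y) + 2 * pi * of_int m"
    "2 * pi * (of_int m * x + of_int n * (y + 1)) =
      2 * pi * (of_int m * x + of_int n * y) + 2 * pi * of_int n" for x y :: real
    by (simp_all add: algebra_simps)
  show "periodic2 (plane_wave sin m n)" "periodic2 (plane_wave cos m n)"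
    unfolding periodic2_def plane_wave_def by (simp_all add: shift sin_add cos_add)
qed

lemma
  shows pdx_plane_wave_sin: "pdx (plane_wave sin m n) = (\<lambda>q. 2 * pi * m * plane_wave cos m n q)"
    and pdy_plane_wave_sin: "pdy (plane_wave sin m n) = (\<lambda>q. 2 * pi * n * plane_wave cos m n q)"
    and pdx_plane_wave_cos: "pdx (plane_wave cos m n) = (\<lambda>q. - 2 * pi * m * plane_wave sin m n q)"
    and pdy_plane_wave_cos: "pdy (plane_wave cos m n) = (\<lambda>q. - 2 * pi * n * plane_wave sin m n q)"
  unfolding plane_wave_def
  by (rule pdx_eqI pdy_eqI; auto intro!: derivative_eq_intros)+

lemma mult_sin_cos_eq_zeroD:
  fixes a t :: real
  assumes "a * sin t = 0" "a * cos t = 0"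
  shows "a = 0"
proof -
  have "a = a * (sin t)\<^sup>2 + a * (cos t)\<^sup>2"
    by (simp add: distrib_left[symmetric])
  also have "\<dots> = 0"
    by (simp add: power2_eq_square mult.assoc[symmetric] assms)
  finally show ?thesis .
qed

lemma constant_if_pdx_pdy_zero:
  assumes "\<forall>p. f differentiable (at p)" "\<forall>p. pdx f p = 0" "\<forall>p. pdy f p = 0"
  shows "f = (\<lambda>q. f (0, 0))"
proof
  fix q :: "real \<times> real"
  obtain x y where q: "q = (x, y)"
    by fastforce
  have "\<forall>t. ((\<lambda>t. f (t, y)) has_real_derivative 0) (at t)"
    using assms(1,2) pdx_has_real_derivative by metis
  then have "f (x, y) = f (0, y)"
    using DERIV_isconst_all by fastforce
  moreover have "\<forall>t. ((\<lambda>t. f (0, t)) has_real_derivative 0) (at t)"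
    using assms(1,3) pdy_has_real_derivative by metis
  then have "f (0, y) = f (0, 0)"
    using DERIV_isconst_all by fastforce
  ultimately show "f q = f (0, 0)"
    by (simp add: q)
qed

locale divergence_free_preserving =
  fixes A B C D :: rfun2
  assumes differentiable: "\<forall>p. A differentiable (at p)" "\<forall>p. B differentiable (at p)"
    "\<forall>p. C differentiable (at p)" "\<forall>p. D differentiable (at p)"
    and preserves: "\<And>X. torus_fun (fst X) \<Longrightarrow> torus_fun (snd X) \<Longrightarrow> \<forall>p. divergence X p = 0
      \<Longrightarrow> \<forall>p. divergence (field_transform A B C D X) p = 0"
begin

lemma divergence_transform_wave_field:
  assumes "w \<in> smooth_terms" "periodic2 w" "\<forall>q. \<alpha> * pdx w q + \<beta> * pdy w q = 0"
  shows "(\<alpha> * (pdx A p + pdy C p) + \<beta> * (pdx B p + pdy D p)) * w p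
    + \<alpha> * (A p * pdx w p + C p * pdy w p) + \<beta> * (B p * pdx w p + D p * pdy w p) = 0"
proof -
  define X where "X = (\<lambda>q. \<alpha> * w q, \<lambda>q. \<beta> * w q)"
  have w: "\<forall>p. w differentiable (at p)"
    using assms(1) smooth_terms_differentiable by blast
  have "torus_fun (fst X)" "torus_fun (snd X)"
    using assms(1,2) unfolding X_def torus_fun_iff periodic2_def
    by (auto intro!: smooth_terms_intros)
  moreover have "\<forall>p. divergence X p = 0"
    using assms(3) w by (simp add: X_def divergence_def pdx_mult pdy_mult pdx_const pdy_const)
  ultimately have "divergence (field_transform A B C D X) p = 0"
    using preserves by blast
  then show ?thesis
    using w differentiable unfolding X_def
    by (simp add: divergence_field_transform pdx_mult pdy_mult pdx_const pdy_const algebra_simps)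
qed

lemma first_order_terms_zero: "pdx A p + pdy C p = 0" "pdx B p + pdy D p = 0"
  using divergence_transform_wave_field[of "\<lambda>q. 1" 1 0 p]
    divergence_transform_wave_field[of "\<lambda>q. 1" 0 1 p]
  by (simp_all add: pdx_const pdy_const periodic2_def smooth_terms.const)

lemma symbol_times_wave_zero:
  assumes "w \<in> smooth_terms" "periodic2 w"
    and "pdx w = (\<lambda>q. k * m * w' q)" "pdy w = (\<lambda>q. k * n * w' q)" "\<alpha> * m + \<beta> * n = 0"
  shows "k * (\<alpha> * (A p * m + C p * n) + \<beta> * (B p * m + D p * n)) * w' p = 0"
proof -
  have "\<alpha> * pdx w q + \<beta> * pdy w q = k * w' q * (\<alpha> * m + \<beta> * n)" for q
    by (simp add: assms(3,4) algebra_simps)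
  then have "\<forall>q. \<alpha> * pdx w q + \<beta> * pdy w q = 0"
    using assms(5) by simp
  from divergence_transform_wave_field[OF assms(1,2) this, of p] show ?thesis
    by (simp add: first_order_terms_zero assms(3,4) algebra_simps)
qed

lemma symbol_zero:
  fixes \<alpha> \<beta> :: real and m n :: int
  assumes "\<alpha> * m + \<beta> * n = 0"
  shows "\<alpha> * (A p * m + C p * n) + \<beta> * (B p * m + D p * n) = 0"
proof -
  let ?S = "\<alpha> * (A p * m + C p * n) + \<beta> * (B p * m + D p * n)"
  have "2 * pi * ?S * plane_wave cos m n p = 0"
    using assms by (rule symbol_times_wave_zero[OF plane_wave_sin_smooth periodic2_plane_wave_sin
        pdx_plane_wave_sin pdy_plane_wave_sin])
  moreover have "- 2 * pi * ?S * plane_wave sin m n p = 0"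
    using assms by (rule symbol_times_wave_zero[OF plane_wave_cos_smooth periodic2_plane_wave_cos
        pdx_plane_wave_cos pdy_plane_wave_cos])
  ultimately show ?thesis
    unfolding plane_wave_def by (intro mult_sin_cos_eq_zeroD[of ?S]) simp_all
qed

lemma scalar_matrix:
  "B = (\<lambda>q. 0) \<and> C = (\<lambda>q. 0) \<and> D = A \<and> (\<exists>c. A = (\<lambda>q. c))"
proof -
  have C: "C = (\<lambda>q. 0)"
    using symbol_zero[of 1 0 0 1] by auto
  have B: "B = (\<lambda>q. 0)"
    using symbol_zero[of 0 1 1 0] by auto
  have D: "D = A"
    using symbol_zero[of 1 1 1 "-1"] by (auto simp: B C)
  have "A = (\<lambda>q. A (0, 0))"
    using differentiable(1) first_order_terms_zero
    by (intro constant_if_pdx_pdy_zero) (simp_all add: B C D pdx_const pdy_const)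
  with B C D show ?thesis
    by blast
qed

end

definition metric_det :: "rfun2 \<Rightarrow> rfun2 \<Rightarrow> rfun2 \<Rightarrow> rfun2" where
  "metric_det E F G = (\<lambda>q. E q * G q - (F q)\<^sup>2)"

definition flux ::
  "rfun2 \<Rightarrow> rfun2 \<Rightarrow> rfun2 \<Rightarrow> rfun2 \<Rightarrow> rfun2 \<times> rfun2 \<Rightarrow> rfun2 \<times> rfun2" where
  "flux E F G P \<omega> =
    (\<lambda>q. sqrt (metric_det E F G q) * P q * (G q * fst \<omega> q - F q * snd \<omega> q) / metric_det E F G q,
     \<lambda>q. sqrt (metric_det E F G q) * P q * (E q * snd \<omega> q - F q * fst \<omega> q) / metric_det E F G q)"

definition form_with_flux ::
  "rfun2 \<Rightarrow> rfun2 \<Rightarrow> rfun2 \<Rightarrow> rfun2 \<Rightarrow> rfun2 \<times> rfun2 \<Rightarrow> rfun2 \<times> rfun2" where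
  "form_with_flux E F G P X =
    (\<lambda>q. (E q * fst X q + F q * snd X q) / (sqrt (metric_det E F G q) * P q),
     \<lambda>q. (F q * fst X q + G q * snd X q) / (sqrt (metric_det E F G q) * P q))"

lemma twisted_codiff_eq_divergence_flux:
  "twisted_codiff E F G P a b p =
    - divergence (flux E F G P (a, b)) p / (sqrt (metric_det E F G p) * P p)"
proof -
  have "(\<lambda>q. sqrt (metric_det E F G q) *
      ((G q * (P q * a q) - F q * (P q * b q)) / metric_det E F G q)) = fst (flux E F G P (a, b))"
    "(\<lambda>q. sqrt (metric_det E F G q) *
      ((- F q * (P q * a q) + E q * (P q * b q)) / metric_det E F G q)) = snd (flux E F G P (a, b))"
    by (auto simp: flux_def algebra_simps)
  then show ?thesis
    unfolding twisted_codiff_def codiff_def Let_def divergence_def metric_det_def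
    by (simp add: add_divide_distrib diff_divide_distrib)
qed

lemma
  assumes "riem_metric E F G"
  shows riem_metric_E_pos: "E p > 0" and metric_det_pos: "metric_det E F G p > 0"
  using assms unfolding riem_metric_def metric_det_def by blast+

lemma ker_twisted_iff_divergence_flux:
  assumes "riem_metric E F G" "\<forall>p. P p > 0"
  shows "\<omega> \<in> ker_twisted E F G P \<longleftrightarrow>
    torus_fun (fst \<omega>) \<and> torus_fun (snd \<omega>) \<and> (\<forall>p. divergence (flux E F G P \<omega>) p = 0)"
proof -
  have "metric_det E F G p \<noteq> 0" "P p \<noteq> 0" for p
    using assms(2)[rule_format, of p] metric_det_pos[OF assms(1), of p] by simp_all
  then show ?thesis
    by (cases \<omega>) (simp add: ker_twisted_def twisted_codiff_eq_divergence_flux)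
qed

lemma flux_form_with_flux_change_metric:
  fixes E F G E' F' G' P Q :: rfun2
  defines "K \<equiv> \<lambda>q. sqrt (metric_det E' F' G' q) * Q q /
    (metric_det E' F' G' q * sqrt (metric_det E F G q) * P q)"
  assumes "riem_metric E F G" "riem_metric E' F' G'" "\<forall>p. P p > 0"
  shows "flux E' F' G' Q (form_with_flux E F G P X) =
    field_transform (\<lambda>q. K q * (G' q * E q - F' q * F q)) (\<lambda>q. K q * (G' q * F q - F' q * G q))
      (\<lambda>q. K q * (E' q * F q - F' q * E q)) (\<lambda>q. K q * (E' q * G q - F' q * F q)) X"
proof -
  have "sqrt (metric_det E F G q) \<noteq> 0" "metric_det E' F' G' q \<noteq> 0" "P q \<noteq> 0" for q
    using assms(2-4) metric_det_pos by (metis less_irrefl real_sqrt_gt_zero)+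
  then show ?thesis
    by (auto simp: flux_def form_with_flux_def field_transform_def K_def field_simps)
qed

lemma flux_form_with_flux:
  assumes "riem_metric E F G" "\<forall>p. P p > 0"
  shows "flux E F G P (form_with_flux E F G P X) = X"
proof -
  have "sqrt (metric_det E F G q) \<noteq> 0" "metric_det E F G q \<noteq> 0" "P q \<noteq> 0" for q
    using assms metric_det_pos by (metis less_irrefl real_sqrt_gt_zero)+
  then show ?thesis
    using flux_form_with_flux_change_metric[OF assms(1,1,2), of P X]
    by (simp add: field_transform_def metric_det_def power2_eq_square algebra_simps)
qed

lemma torus_fun_metric_det: "riem_metric E F G \<Longrightarrow> torus_fun (metric_det E F G)"
  unfolding riem_metric_def torus_fun_iff metric_det_def periodic2_def
  by (auto simp: power2_eq_square intro!: smooth_terms_intros)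

lemma torus_fun_form_with_flux:
  assumes "riem_metric E F G" "torus_fun P" "\<forall>p. P p > 0"
    and "torus_fun (fst X)" "torus_fun (snd X)"
  shows "torus_fun (fst (form_with_flux E F G P X)) \<and> torus_fun (snd (form_with_flux E F G P X))"
proof -
  have "sqrt (metric_det E F G q) * P q \<noteq> 0" "metric_det E F G q > 0" for q
    using assms(1,3) metric_det_pos by (metis less_irrefl mult_pos_pos real_sqrt_gt_zero)+
  then show ?thesis
    using assms torus_fun_metric_det[OF assms(1)]
    unfolding form_with_flux_def torus_fun_iff riem_metric_def periodic2_def
    by (auto intro!: smooth_terms_intros)
qed

lemma conformal_change_coefficient:
  fixes E F G P Q l :: real
  assumes "E * G - F\<^sup>2 > 0" "P > 0" "l > 0"
  shows "sqrt ((l * E) * (l * G) - (l * F)\<^sup>2) * Q /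
      (((l * E) * (l * G) - (l * F)\<^sup>2) * sqrt (E * G - F\<^sup>2) * P) * ((l * G) * E - (l * F) * F)
    = Q / P"
proof -
  have det: "(l * E) * (l * G) - (l * F)\<^sup>2 = l\<^sup>2 * (E * G - F\<^sup>2)"
    by (simp add: algebra_simps power2_eq_square)
  have "sqrt (l\<^sup>2 * (E * G - F\<^sup>2)) = l * sqrt (E * G - F\<^sup>2)"
    using assms(3) by (simp add: real_sqrt_mult)
  moreover have "sqrt (E * G - F\<^sup>2) > 0"
    using assms(1) by simp
  ultimately show ?thesis
    unfolding det using assms by (simp add: field_simps power2_eq_square)
qed

locale twisted_kernel_inclusion =
  fixes E F G E' F' G' P Q :: rfun2
  assumes metric: "riem_metric E F G" and metric': "riem_metric E' F' G'"
    and weight: "torus_fun P" "\<forall>p. P p > 0" and weight': "torus_fun Q" "\<forall>p. Q p > 0"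
    and kernel_subset: "ker_twisted E F G P \<subseteq> ker_twisted E' F' G' Q"
begin

definition flux_scale :: rfun2 where
  "flux_scale = (\<lambda>q. sqrt (metric_det E' F' G' q) * Q q /
    (metric_det E' F' G' q * sqrt (metric_det E F G q) * P q))"

text \<open>The matrix M = (Q \<surd>(det g')) / (P \<surd>(det g)) g'\<inverse> g, with g'\<inverse> = adj g' / det g'.\<close>
definition m11 :: rfun2 where "m11 = (\<lambda>q. flux_scale q * (G' q * E q - F' q * F q))"
definition m12 :: rfun2 where "m12 = (\<lambda>q. flux_scale q * (G' q * F q - F' q * G q))"
definition m21 :: rfun2 where "m21 = (\<lambda>q. flux_scale q * (E' q * F q - F' q * E q))"
definition m22 :: rfun2 where "m22 = (\<lambda>q. flux_scale q * (E' q * G q - F' q * F q))"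

lemma positive: "metric_det E F G q > 0" "metric_det E' F' G' q > 0" "P q > 0" "Q q > 0"
  "E q > 0" "E' q > 0"
  using metric metric' weight(2)[rule_format] weight'(2)[rule_format]
  by (simp_all add: metric_det_pos riem_metric_E_pos)

lemma flux_change_metric:
  "flux E' F' G' Q (form_with_flux E F G P X) = field_transform m11 m12 m21 m22 X"
  unfolding m11_def m12_def m21_def m22_def flux_scale_def
  by (rule flux_form_with_flux_change_metric[OF metric metric' weight(2)])

lemma smooth_flux_scale: "flux_scale \<in> smooth_terms"
proof -
  have "metric_det E' F' G' q * sqrt (metric_det E F G q) * P q \<noteq> 0" for q
    using positive[of q] by simp
  then show ?thesis
    using positive torus_fun_metric_det[OF metric] torus_fun_metric_det[OF metric'] weight weight'
    unfolding flux_scale_def torus_fun_iff by (auto intro!: smooth_terms_intros)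
qed

lemma divergence_free_preserving: "divergence_free_preserving m11 m12 m21 m22"
proof
  have "m11 \<in> smooth_terms" "m12 \<in> smooth_terms" "m21 \<in> smooth_terms" "m22 \<in> smooth_terms"
    using smooth_flux_scale metric metric'
    unfolding m11_def m12_def m21_def m22_def riem_metric_def torus_fun_iff
    by (auto intro!: smooth_terms_intros)
  then show "\<forall>p. m11 differentiable (at p)" "\<forall>p. m12 differentiable (at p)"
    "\<forall>p. m21 differentiable (at p)" "\<forall>p. m22 differentiable (at p)"
    by (simp_all add: smooth_terms_differentiable)
next
  fix X
  assume X: "torus_fun (fst X)" "torus_fun (snd X)" "\<forall>p. divergence X p = 0"
  have "form_with_flux E F G P X \<in> ker_twisted E F G P"
    using ker_twisted_iff_divergence_flux[OF metric weight(2)] flux_form_with_flux[OF metric weight(2)]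
      torus_fun_form_with_flux[OF metric weight X(1,2)] X(3) by simp
  with kernel_subset have "form_with_flux E F G P X \<in> ker_twisted E' F' G' Q"
    by blast
  then show "\<forall>p. divergence (field_transform m11 m12 m21 m22 X) p = 0"
    using ker_twisted_iff_divergence_flux[OF metric' weight'(2)] by (simp add: flux_change_metric)
qed

lemma conformal_factor: "F' q = E' q / E q * F q" "G' q = E' q / E q * G q"
proof -
  have "flux_scale q \<noteq> 0"
    using positive[of q] unfolding flux_scale_def by simp
  moreover have "m12 q = 0" "m21 q = 0" "m22 q = m11 q"
    using divergence_free_preserving.scalar_matrix[OF divergence_free_preserving] by simp_all
  ultimately have "E' q * F q = F' q * E q" "E' q * G q = G' q * E q"
    unfolding m11_def m12_def m21_def m22_def by simp_all
  then show "F' q = E' q / E q * F q" "G' q = E' q / E q * G q"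
    using positive(5)[of q] by (simp_all add: field_simps)
qed

lemma conformally_equivalent: "conformally_equivalent E F G E' F' G'"
proof -
  have E: "E q \<noteq> 0" for q
    using positive(5)[of q] by simp
  then have "torus_fun (\<lambda>q. E' q / E q)"
    using metric metric' unfolding riem_metric_def torus_fun_iff periodic2_def
    by (auto intro!: smooth_terms_intros)
  moreover have "E' q / E q > 0 \<and> E' q = E' q / E q * E q \<and> F' q = E' q / E q * F q \<and>
      G' q = E' q / E q * G q" for q
    using positive(5,6)[of q] E[of q] conformal_factor[of q] by simp
  ultimately show ?thesis
    unfolding conformally_equivalent_def by blast
qed

lemma m11_eq: "m11 q = Q q / P q"
proof -
  define l where "l = E' q / E q"
  have "E' q = l * E q"
    using positive(5)[of q] unfolding l_def by simp
  moreover have "F' q = l * F q" "G' q = l * G q"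
    unfolding l_def by (fact conformal_factor)+
  moreover have "l > 0"
    using positive(5,6)[of q] unfolding l_def by simp
  ultimately show ?thesis
    using positive(1,3)[of q] unfolding m11_def flux_scale_def metric_det_def
    by (simp only:) (rule conformal_change_coefficient)
qed

lemma weights_proportional: "\<exists>c>0. \<forall>p. P p = c * Q p"
proof -
  obtain c where "m11 = (\<lambda>q. c)"
    using divergence_free_preserving.scalar_matrix[OF divergence_free_preserving] by blast
  then have c_eq: "c = Q q / P q" for q
    using m11_eq[of q] by simp
  then have "c > 0"
    using positive(3,4) by (metis divide_pos_pos)
  moreover have "P q = 1 / c * Q q" for q
    using c_eq[of q] positive(3)[of q] \<open>c > 0\<close> by (simp add: field_simps)
  ultimately show ?thesis
    by (metis divide_pos_pos zero_less_one)
qed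

end

theorem proposition7:
  fixes E F G E' F' G' P Q :: "real \<times> real \<Rightarrow> real"
  assumes "riem_metric E F G" and "riem_metric E' F' G'"
    and "torus_fun P" and "torus_fun Q"
    and "\<forall>p. P p > 0" and "\<forall>p. Q p > 0"
    and "ker_twisted E F G P \<subseteq> ker_twisted E' F' G' Q"
  shows "conformally_equivalent E F G E' F' G' \<and> (\<exists>c>0. \<forall>p. P p = c * Q p)"
proof -
  interpret twisted_kernel_inclusion E F G E' F' G' P Q
    using assms by unfold_locales
  show ?thesis
    using conformally_equivalent weights_proportional by blast
qed

end
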